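(* Let $1\le p_1\le\cdots\le p_d\le n$ be integers and let $G_0=G_0(p_1,\ldots,p_d)$ be the $d$-uniform $d$-partite hypergraph with vertex classes $V_1,\ldots,V_d$, each identified with $[n]$, in which a $d$-tuple $(x_1,\ldots,x_d)\in[n]^d$ (the edge containing vertex $x_i$ of $V_i$ for each $i$) is a NON-edge if and only if $x_{(i)}\ge p_i$ for every $1\le i\le d$. Then $W_n(p_1,\ldots,p_d)\le \|G_0\|$, where $\|G_0\|$ is the number of edges of $G_0$.
   Context: A $d$-uniform $d$-partite hypergraph has vertex classes $V_1,\ldots,V_d$ and edges that contain exactly one vertex from each class; only such $d$-sets are considered as possible edges. A copy of $K^d_{p_1,\ldots,p_d}$ in $H$ is a permutation $\pi:[d]\to[d]$ together with sets $S_i\subseteq V_i$, $|S_i|=p_{\pi(i)}$, such that all $d$-sets with one vertex from each $S_i$ are edges. $H$ is weakly $K^d_{p_1,\ldots,p_d}$-saturated if its non-edges can be added one at a time in some order so that each added edge creates a new copy of $K^d_{p_1,\ldots,p_d}$ containing that edge. $W_n(p_1,\ldots,p_d)$ is the minimum number of edges in a weakly $K^d_{p_1,\ldots,p_d}$-saturated such hypergraph with $n$ vertices in each class. For $x\in[n]^d$, $x_{(i)}$ is the $i$-th smallest entry of $x$ sorted with repetitions. *)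

theory Defs
  imports Main
begin

text \<open>Vertex classes V_1..V_d are indexed 0..<d, each identified with {1..n}.
 A possible edge (d-set with one vertex per class) is a list x of length d with entries in {1..n}
 (x ! i is the vertex in class i). A hypergraph is a set of such lists.\<close>

definition tuples :: "nat \<Rightarrow> nat \<Rightarrow> nat list set" where
  "tuples d n = {x. length x = d \<and> set x \<subseteq> {1..n}}"

text \<open>A copy of K^d_{p_1..p_d} in H containing the edge e.\<close>
definition copy_containing :: "nat list \<Rightarrow> nat \<Rightarrow> nat list set \<Rightarrow> nat list \<Rightarrow> bool" where
  "copy_containing p n H e \<longleftrightarrow>
     (\<exists>\<pi> S. bij_betw \<pi> {..<length p} {..<length p} \<and>
        (\<forall>i<length p. S i \<subseteq> {1..n} \<and> card (S i) = p ! (\<pi> i) \<and> e ! i \<in> S i) \<and>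
        {x. length x = length p \<and> (\<forall>i<length p. x ! i \<in> S i)} \<subseteq> H)"

definition weakly_saturated :: "nat list \<Rightarrow> nat \<Rightarrow> nat list set \<Rightarrow> bool" where
  "weakly_saturated p n H \<longleftrightarrow>
     H \<subseteq> tuples (length p) n \<and>
     (\<exists>es. distinct es \<and> set es = tuples (length p) n - H \<and>
        (\<forall>j<length es. copy_containing p n (H \<union> set (take (Suc j) es)) (es ! j)))"

definition W :: "nat \<Rightarrow> nat list \<Rightarrow> nat" where
  "W n p = Min {card H | H. weakly_saturated p n H}"

text \<open>G_0: x is a non-edge iff x_(i) \<ge> p_i for all i (sort x ! i is the (i+1)-th smallest entry).\<close>
definition G0 :: "nat list \<Rightarrow> nat \<Rightarrow> nat list set" where
  "G0 p n = {x \<in> tuples (length p) n. \<not> (\<forall>i<length p. sort x ! i \<ge> p ! i)}"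

end

theory Submission
  imports Defs "HOL-Combinatorics.List_Permutation"
begin

text \<open>Add the non-edges of \<open>G0\<close> in order of increasing coordinate sum. A non-edge \<open>x\<close>
  has \<open>x_(i) \<ge> p_i\<close> for all \<open>i\<close>, so permuting the \<open>p_i\<close> along the sorting permutation \<open>\<tau>\<close>
  of \<open>x\<close> gives \<open>x ! i \<ge> p ! \<tau> i\<close>. The box with sides \<open>{1..<p ! \<tau> i} \<union> {x ! i}\<close> is then a
  copy of \<open>K_{p_1,...,p_d}\<close> through \<open>x\<close>, and every other tuple in it lies coordinatewise below
  \<open>x\<close>, hence has smaller sum: it is an edge of \<open>G0\<close> or a non-edge added earlier.\<close>

lemma sum_list_strict_mono:
  fixes xs ys :: "'a::ordered_cancel_comm_monoid_add list"
  assumes "length xs = length ys" and "\<forall>i<length xs. xs ! i \<le> ys ! i" and "xs \<noteq> ys"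
  shows "sum_list xs < sum_list ys"
proof -
  have "\<exists>i\<in>{0..<length xs}. xs ! i < ys ! i"
  proof (rule ccontr)
    assume "\<not> (\<exists>i\<in>{0..<length xs}. xs ! i < ys ! i)"
    with assms(2) have "\<forall>i<length xs. xs ! i = ys ! i"
      by (auto simp: order_less_le)
    with assms(1,3) show False
      by (simp add: list_eq_iff_nth_eq)
  qed
  with assms(1,2) show ?thesis
    by (simp add: sum_list_sum_nth sum_strict_mono_ex1)
qed

lemma finite_tuples: "finite (tuples d n)"
proof -
  have "tuples d n = {xs. set xs \<subseteq> {1..n} \<and> length xs = d}"
    unfolding tuples_def by auto
  then show ?thesis
    using finite_lists_length_eq[of "{1..n}" d] by simp
qed

lemma copy_containing_mono:
  "copy_containing p n H e \<Longrightarrow> H \<subseteq> H' \<Longrightarrow> copy_containing p n H' e"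
  unfolding copy_containing_def by blast

lemma W_le_card:
  assumes "weakly_saturated p n H"
  shows "W n p \<le> card H"
proof -
  have "{card H | H. weakly_saturated p n H} \<subseteq> {..card (tuples (length p) n)}"
    using finite_tuples by (auto simp: weakly_saturated_def intro: card_mono)
  then have "finite {card H | H. weakly_saturated p n H}"
    by (rule finite_subset) simp
  then show ?thesis
    unfolding W_def by (rule Min_le) (use assms in blast)
qed

lemma weakly_saturated_if_copies_below:
  fixes f :: "nat list \<Rightarrow> 'a::linorder"
  assumes H: "H \<subseteq> tuples (length p) n"
    and copies: "\<And>x. x \<in> tuples (length p) n - H \<Longrightarrow>
      copy_containing p n (H \<union> {y \<in> tuples (length p) n - H. f y < f x} \<union> {x}) x"
  shows "weakly_saturated p n H"
proof -
  let ?N = "tuples (length p) n - H"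
  obtain es0 where "distinct es0" "set es0 = ?N"
    using finite_distinct_list[of ?N] finite_tuples by blast
  define es where "es = sort_key f es0"
  have es: "distinct es" "set es = ?N" "sorted (map f es)"
    using \<open>distinct es0\<close> \<open>set es0 = ?N\<close> unfolding es_def by auto
  have "copy_containing p n (H \<union> set (take (Suc j) es)) (es ! j)" if j: "j < length es" for j
  proof (rule copy_containing_mono[OF copies])
    show "es ! j \<in> ?N"
      using es(2) j nth_mem by blast
    have "y \<in> set (take (Suc j) es)" if y: "y \<in> ?N" "f y < f (es ! j)" for y
    proof -
      obtain k where k: "k < length es" "y = es ! k"
        using y(1) es(2) by (metis in_set_conv_nth)
      have "k < j"
      proof (rule ccontr)
        assume "\<not> k < j"
        then have "f (es ! j) \<le> f (es ! k)"
          using sorted_nth_mono[OF es(3), of j k] k j by simp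
        with y(2) k show False by simp
      qed
      with k show ?thesis
        by (auto simp: in_set_conv_nth intro!: exI[of _ k])
    qed
    moreover have "es ! j \<in> set (take (Suc j) es)"
      using j by (simp add: take_Suc_conv_app_nth)
    ultimately show "H \<union> {y \<in> ?N. f y < f (es ! j)} \<union> {es ! j} \<subseteq> H \<union> set (take (Suc j) es)"
      by blast
  qed
  with H es(1,2) show ?thesis
    unfolding weakly_saturated_def by blast
qed

lemma non_edge_G0_dominates_permuted_p:
  assumes "x \<in> tuples (length p) n - G0 p n"
  obtains \<tau> where "bij_betw \<tau> {..<length p} {..<length p}"
    and "\<And>i. i < length p \<Longrightarrow> p ! \<tau> i \<le> x ! i"
proof -
  have lx: "length x = length p" and ge: "\<forall>i<length p. p ! i \<le> sort x ! i"
    using assms unfolding tuples_def G0_def by auto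
  obtain \<tau> where \<tau>: "bij_betw \<tau> {..<length x} {..<length (sort x)}"
    "\<forall>i<length x. x ! i = sort x ! \<tau> i"
    using permutation_Ex_bij[of x "sort x"] by auto
  then have bij: "bij_betw \<tau> {..<length p} {..<length p}"
    using lx by simp
  have "p ! \<tau> i \<le> x ! i" if "i < length p" for i
    using \<tau>(2) ge bij_betwE[OF bij] that lx by auto
  then show ?thesis
    using that[OF bij] by blast
qed

lemma copy_containing_box:
  assumes x: "x \<in> tuples (length p) n"
    and \<tau>: "bij_betw \<tau> {..<length p} {..<length p}"
    and p_pos: "\<forall>i<length p. 1 \<le> p ! i"
    and le: "\<And>i. i < length p \<Longrightarrow> p ! \<tau> i \<le> x ! i"
    and box: "\<And>y. y \<in> tuples (length p) n \<Longrightarrow> \<forall>i<length p. y ! i \<le> x ! i \<Longrightarrow> y \<in> H"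
  shows "copy_containing p n H x"
proof -
  define S where "S i = {1..<p ! \<tau> i} \<union> {x ! i}" for i
  have x_i: "x ! i \<in> {1..n}" if "i < length p" for i
  proof -
    have "set x \<subseteq> {1..n}" "i < length x"
      using x that by (auto simp: tuples_def)
    then show ?thesis
      using nth_mem by blast
  qed
  have S: "S i \<subseteq> {1..n} \<and> card (S i) = p ! \<tau> i \<and> x ! i \<in> S i" if i: "i < length p" for i
  proof -
    have "1 \<le> p ! \<tau> i"
      using p_pos bij_betwE[OF \<tau>] i by blast
    moreover have "x ! i \<notin> {1..<p ! \<tau> i}"
      using le[OF i] by simp
    ultimately show ?thesis
      using le[OF i] x_i[OF i] unfolding S_def by auto
  qed
  have "y \<in> H" if y: "length y = length p" "\<forall>i<length p. y ! i \<in> S i" for y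
  proof (rule box)
    show "\<forall>i<length p. y ! i \<le> x ! i"
      using y(2) le unfolding S_def by fastforce
    have "\<forall>i<length p. y ! i \<in> {1..n}"
      using y(2) S by blast
    with y(1) show "y \<in> tuples (length p) n"
      unfolding tuples_def by (auto simp: in_set_conv_nth)
  qed
  then show ?thesis
    unfolding copy_containing_def using \<tau> S by (intro exI[of _ \<tau>] exI[of _ S]) blast
qed

lemma weakly_saturated_G0:
  assumes "\<forall>i<length p. 1 \<le> p ! i \<and> p ! i \<le> n"
  shows "weakly_saturated p n (G0 p n)"
proof (rule weakly_saturated_if_copies_below[where f = sum_list])
  show "G0 p n \<subseteq> tuples (length p) n"
    unfolding G0_def by auto
  fix x assume x: "x \<in> tuples (length p) n - G0 p n"
  obtain \<tau> where bij: "bij_betw \<tau> {..<length p} {..<length p}"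
    and le: "\<And>i. i < length p \<Longrightarrow> p ! \<tau> i \<le> x ! i"
    using non_edge_G0_dominates_permuted_p[OF x] by blast
  show "copy_containing p n
      (G0 p n \<union> {y \<in> tuples (length p) n - G0 p n. sum_list y < sum_list x} \<union> {x}) x"
  proof (rule copy_containing_box[OF DiffD1[OF x] bij _ le])
    show "\<forall>i<length p. 1 \<le> p ! i"
      using assms by simp
    fix y assume y: "y \<in> tuples (length p) n" "\<forall>i<length p. y ! i \<le> x ! i"
    have "sum_list y < sum_list x" if "y \<noteq> x"
      using sum_list_strict_mono[of y x] y x that unfolding tuples_def by auto
    with y show "y \<in> G0 p n \<union> {y \<in> tuples (length p) n - G0 p n. sum_list y < sum_list x} \<union> {x}"
      by blast
  qed
qed

theorem lemma1:
  fixes p :: "nat list" and n :: nat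
  assumes "sorted p" and "\<forall>i<length p. 1 \<le> p ! i \<and> p ! i \<le> n"
  shows "W n p \<le> card (G0 p n)"
  using W_le_card weakly_saturated_G0[OF assms(2)] .

end
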